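(* Let $Y\subset\mathbb{R}^n$ be open, and let $\omega\colon Y\to\mathbb{R}^n$, $f\colon Y\to\mathbb{R}^n$, $F\colon Y\to\mathbb{R}$, $H\colon Y\to\mathbb{R}^{n\times m}$, $g\colon Y\to\mathbb{R}^m$, $f^{\mathrm{num}}\colon Y\times Y\to\mathbb{R}^n$, $H^{\mathrm{num}}\colon Y\times Y\to\mathbb{R}^{n\times m}$ be arbitrary with $f^{\mathrm{num}}(u,u)=f(u)$ and $H^{\mathrm{num}}(u,u)=H(u)$. Then the following are equivalent: (A) there exists $F^{\mathrm{num}}\colon Y\times Y\to\mathbb{R}$ with $F^{\mathrm{num}}(u,u)=F(u)$ such that for all $u_-,u_0,u_+\in Y$, $$\omega(u_0)\cdot\Big(f^{\mathrm{num}}(u_0,u_+)-f^{\mathrm{num}}(u_-,u_0)+\tfrac12H^{\mathrm{num}}(u_0,u_+)\big(g(u_+)-g(u_0)\big)+\tfrac12H^{\mathrm{num}}(u_-,u_0)\big(g(u_0)-g(u_-)\big)\Big)\ \ge\ F^{\mathrm{num}}(u_0,u_+)-F^{\mathrm{num}}(u_-,u_0);$$ (B) for all $u_-,u_+\in Y$, $$[\![\omega]\!]\cdot f^{\mathrm{num}}(u_-,u_+)-\{\{\omega\}\}\cdot H^{\mathrm{num}}(u_-,u_+)\,[\![g]\!]\ \le\ [\![\omega\cdot f-F]\!].$$ Moreover, there exists a consistent $F^{\mathrm{num}}$ with equality in (A) for all triples iff (B) holds with equality for all pairs, and then $$F^{\mathrm{num}}=\{\{F\}\}+\{\{\omega\}\}\cdot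 f^{\mathrm{num}}-\{\{\omega\cdot f\}\}-\tfrac14[\![\omega]\!]\cdot H^{\mathrm{num}}[\![g]\!].$$
   Context: For a function $a$ on $Y$ and states $u_\pm$: $\{\{a\}\}=\tfrac12(a(u_-)+a(u_+))$, $[\![a]\!]=a(u_+)-a(u_-)$; numerical fluxes are evaluated at $(u_-,u_+)$. *)

theory Defs
  imports "HOL-Analysis.Analysis"
begin

end

theory Submission
  imports Defs
begin

text \<open>
  The left-hand side of (A) splits as a(u0, u+) + b(u-, u0), where a(u, v) and b(u, v) are the
  shares of the interface (u, v) that go to the cell on its left and on its right, and a trivial
  interface contributes a(u, u) + b(u, u) = 0. Specialising (A) to the triples (u, u, v) and
  (u, v, v) and adding gives (B), since Fnum(u, v) cancels. Conversely, the numerical flux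
  Fnum(u, v) = F(u) + a(u, v) - a(u, u) turns the cell residual of (u-, u0, u+) into exactly the
  interface residual of (u-, u0), so (B) gives (A). In the equality case the two special triples
  determine Fnum(u, v) from both sides; averaging them yields the stated formula.
\<close>

locale interface_splitting =
  fixes a b :: "'a \<Rightarrow> 'a \<Rightarrow> real"
  assumes trivial_interface: "a u u + b u u = 0"
begin

definition cell_residual :: "('a \<Rightarrow> 'a \<Rightarrow> real) \<Rightarrow> 'a \<Rightarrow> 'a \<Rightarrow> 'a \<Rightarrow> real" where
  "cell_residual Fn um u0 up = a u0 up + b um u0 - (Fn u0 up - Fn um u0)"

definition interface_residual :: "('a \<Rightarrow> real) \<Rightarrow> 'a \<Rightarrow> 'a \<Rightarrow> real" where
  "interface_residual F u v = a u v + b u v - a u u - b v v - (F v - F u)"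

definition canonical_flux :: "('a \<Rightarrow> real) \<Rightarrow> 'a \<Rightarrow> 'a \<Rightarrow> real" where
  "canonical_flux F u v = F u + a u v - a u u"

lemma canonical_flux_diag: "canonical_flux F u u = F u"
  by (simp add: canonical_flux_def)

lemma cell_residual_canonical_flux:
  "cell_residual (canonical_flux F) um u0 up = interface_residual F um u0"
  using trivial_interface[of u0]
  by (simp add: cell_residual_def interface_residual_def canonical_flux_def)

lemma interface_residual_eq_cell_residuals:
  assumes "Fn u u = F u" and "Fn v v = F v"
  shows "interface_residual F u v = cell_residual Fn u u v + cell_residual Fn u v v"
  using assms trivial_interface[of u] trivial_interface[of v]
  by (simp add: cell_residual_def interface_residual_def)

lemma flux_unique:
  assumes "Fn u u = F u" and "Fn v v = F v"
    and "cell_residual Fn u u v = 0" and "cell_residual Fn u v v = 0"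
  shows "Fn u v = (F u + F v + a u v - b u v - a u u + b v v) / 2"
  using assms trivial_interface[of u] trivial_interface[of v]
  by (simp add: cell_residual_def field_simps)

lemma exists_flux_iff:
  assumes P_add: "\<And>x y. P x \<Longrightarrow> P y \<Longrightarrow> P (x + y)"
  shows "(\<exists>Fn. (\<forall>u\<in>Y. Fn u u = F u) \<and>
            (\<forall>um\<in>Y. \<forall>u0\<in>Y. \<forall>up\<in>Y. P (cell_residual Fn um u0 up)))
         \<longleftrightarrow> (\<forall>u\<in>Y. \<forall>v\<in>Y. P (interface_residual F u v))"
proof
  assume "\<exists>Fn. (\<forall>u\<in>Y. Fn u u = F u) \<and>
            (\<forall>um\<in>Y. \<forall>u0\<in>Y. \<forall>up\<in>Y. P (cell_residual Fn um u0 up))"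
  then obtain Fn where diag: "\<forall>u\<in>Y. Fn u u = F u"
    and cells: "\<forall>um\<in>Y. \<forall>u0\<in>Y. \<forall>up\<in>Y. P (cell_residual Fn um u0 up)"
    by blast
  show "\<forall>u\<in>Y. \<forall>v\<in>Y. P (interface_residual F u v)"
  proof (intro ballI)
    fix u v assume "u \<in> Y" "v \<in> Y"
    then show "P (interface_residual F u v)"
      using diag cells P_add interface_residual_eq_cell_residuals[of Fn u F v] by simp
  qed
next
  assume "\<forall>u\<in>Y. \<forall>v\<in>Y. P (interface_residual F u v)"
  then show "\<exists>Fn. (\<forall>u\<in>Y. Fn u u = F u) \<and>
            (\<forall>um\<in>Y. \<forall>u0\<in>Y. \<forall>up\<in>Y. P (cell_residual Fn um u0 up))"
    by (intro exI[of _ "canonical_flux F"])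
      (simp add: canonical_flux_diag cell_residual_canonical_flux)
qed

end

locale fluctuation_scheme =
  fixes \<omega> :: "'v \<Rightarrow> real^'n"
    and fnum :: "'v \<Rightarrow> 'v \<Rightarrow> real^'n"
    and Hnum :: "'v \<Rightarrow> 'v \<Rightarrow> real^'m^'n"
    and g :: "'v \<Rightarrow> real^'m"
begin

definition left_share :: "'v \<Rightarrow> 'v \<Rightarrow> real" where
  "left_share u v = \<omega> u \<bullet> (fnum u v + (1/2) *\<^sub>R (Hnum u v *v (g v - g u)))"

definition right_share :: "'v \<Rightarrow> 'v \<Rightarrow> real" where
  "right_share u v = \<omega> v \<bullet> ((1/2) *\<^sub>R (Hnum u v *v (g v - g u)) - fnum u v)"

sublocale interface_splitting left_share right_share
  by unfold_locales (simp add: left_share_def right_share_def)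

lemma cell_update_ge_iff:
  "\<omega> u0 \<bullet> (fnum u0 up - fnum um u0
       + (1/2) *\<^sub>R (Hnum u0 up *v (g up - g u0))
       + (1/2) *\<^sub>R (Hnum um u0 *v (g u0 - g um)))
     \<ge> Fn u0 up - Fn um u0 \<longleftrightarrow> cell_residual Fn um u0 up \<ge> 0"
  by (simp add: cell_residual_def left_share_def right_share_def
      inner_add_right inner_diff_right algebra_simps)

lemma cell_update_eq_iff:
  "\<omega> u0 \<bullet> (fnum u0 up - fnum um u0
       + (1/2) *\<^sub>R (Hnum u0 up *v (g up - g u0))
       + (1/2) *\<^sub>R (Hnum um u0 *v (g u0 - g um)))
     = Fn u0 up - Fn um u0 \<longleftrightarrow> cell_residual Fn um u0 up = 0"
  by (simp add: cell_residual_def left_share_def right_share_def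
      inner_add_right inner_diff_right algebra_simps)

context
  fixes f :: "'v \<Rightarrow> real^'n" and F :: "'v \<Rightarrow> real" and u v :: 'v
  assumes consistent: "fnum u u = f u" "fnum v v = f v"
begin

lemma interface_jump_le_iff:
  "(\<omega> v - \<omega> u) \<bullet> fnum u v - ((1/2) *\<^sub>R (\<omega> u + \<omega> v)) \<bullet> (Hnum u v *v (g v - g u))
     \<le> (\<omega> v \<bullet> f v - F v) - (\<omega> u \<bullet> f u - F u)
   \<longleftrightarrow> interface_residual F u v \<ge> 0"
  using consistent
  by (simp add: interface_residual_def left_share_def right_share_def
      inner_add_left inner_diff_left inner_add_right inner_diff_right algebra_simps)

lemma interface_jump_eq_iff:
  "(\<omega> v - \<omega> u) \<bullet> fnum u v - ((1/2) *\<^sub>R (\<omega> u + \<omega> v)) \<bullet> (Hnum u v *v (g v - g u))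
     = (\<omega> v \<bullet> f v - F v) - (\<omega> u \<bullet> f u - F u)
   \<longleftrightarrow> interface_residual F u v = 0"
  using consistent
  by (auto simp add: interface_residual_def left_share_def right_share_def
      inner_add_left inner_diff_left inner_add_right inner_diff_right algebra_simps)

lemma unique_flux_eq:
  "(F u + F v + left_share u v - right_share u v - left_share u u + right_share v v) / 2
     = (F u + F v) / 2 + ((1/2) *\<^sub>R (\<omega> u + \<omega> v)) \<bullet> fnum u v
       - (\<omega> u \<bullet> f u + \<omega> v \<bullet> f v) / 2
       - (1/4) * ((\<omega> v - \<omega> u) \<bullet> (Hnum u v *v (g v - g u)))"
  using consistent
  by (simp add: left_share_def right_share_def
      inner_add_left inner_diff_left inner_add_right inner_diff_right field_simps)

end

end

theorem mainTheorem6: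
  fixes Y :: "(real^'n) set"
    and \<omega> f :: "real^'n \<Rightarrow> real^'n"
    and F :: "real^'n \<Rightarrow> real"
    and H :: "real^'n \<Rightarrow> real^'m^'n"
    and g :: "real^'n \<Rightarrow> real^'m"
    and fnum :: "real^'n \<Rightarrow> real^'n \<Rightarrow> real^'n"
    and Hnum :: "real^'n \<Rightarrow> real^'n \<Rightarrow> real^'m^'n"
  assumes "open Y"
    and "\<forall>u\<in>Y. fnum u u = f u"
    and "\<forall>u\<in>Y. Hnum u u = H u"
  shows
   "((\<exists>Fnum :: real^'n \<Rightarrow> real^'n \<Rightarrow> real.
        (\<forall>u\<in>Y. Fnum u u = F u) \<and>
        (\<forall>um\<in>Y. \<forall>u0\<in>Y. \<forall>up\<in>Y.
           \<omega> u0 \<bullet> (fnum u0 up - fnum um u0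
               + (1/2) *\<^sub>R (Hnum u0 up *v (g up - g u0))
               + (1/2) *\<^sub>R (Hnum um u0 *v (g u0 - g um)))
           \<ge> Fnum u0 up - Fnum um u0))
     \<longleftrightarrow>
     (\<forall>um\<in>Y. \<forall>up\<in>Y.
        (\<omega> up - \<omega> um) \<bullet> fnum um up
          - ((1/2) *\<^sub>R (\<omega> um + \<omega> up)) \<bullet> (Hnum um up *v (g up - g um))
        \<le> (\<omega> up \<bullet> f up - F up) - (\<omega> um \<bullet> f um - F um)))
    \<and>
    ((\<exists>Fnum :: real^'n \<Rightarrow> real^'n \<Rightarrow> real.
        (\<forall>u\<in>Y. Fnum u u = F u) \<and>
        (\<forall>um\<in>Y. \<forall>u0\<in>Y. \<forall>up\<in>Y.
           \<omega> u0 \<bullet> (fnum u0 up - fnum um u0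
               + (1/2) *\<^sub>R (Hnum u0 up *v (g up - g u0))
               + (1/2) *\<^sub>R (Hnum um u0 *v (g u0 - g um)))
           = Fnum u0 up - Fnum um u0))
     \<longleftrightarrow>
     (\<forall>um\<in>Y. \<forall>up\<in>Y.
        (\<omega> up - \<omega> um) \<bullet> fnum um up
          - ((1/2) *\<^sub>R (\<omega> um + \<omega> up)) \<bullet> (Hnum um up *v (g up - g um))
        = (\<omega> up \<bullet> f up - F up) - (\<omega> um \<bullet> f um - F um)))
    \<and>
    (\<forall>Fnum :: real^'n \<Rightarrow> real^'n \<Rightarrow> real.
        ((\<forall>u\<in>Y. Fnum u u = F u) \<and>
         (\<forall>um\<in>Y. \<forall>u0\<in>Y. \<forall>up\<in>Y.
           \<omega> u0 \<bullet> (fnum u0 up - fnum um u0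
               + (1/2) *\<^sub>R (Hnum u0 up *v (g up - g u0))
               + (1/2) *\<^sub>R (Hnum um u0 *v (g u0 - g um)))
           = Fnum u0 up - Fnum um u0))
        \<longrightarrow>
        (\<forall>um\<in>Y. \<forall>up\<in>Y.
           Fnum um up = (F um + F up) / 2
             + ((1/2) *\<^sub>R (\<omega> um + \<omega> up)) \<bullet> fnum um up
             - (\<omega> um \<bullet> f um + \<omega> up \<bullet> f up) / 2
             - (1/4) * ((\<omega> up - \<omega> um) \<bullet> (Hnum um up *v (g up - g um)))))"
proof -
  interpret fluctuation_scheme \<omega> fnum Hnum g .
  have consistent: "u \<in> Y \<Longrightarrow> fnum u u = f u" for u
    using assms(2) by blast
  have "(\<exists>Fn. (\<forall>u\<in>Y. Fn u u = F u) \<and>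
            (\<forall>um\<in>Y. \<forall>u0\<in>Y. \<forall>up\<in>Y. cell_residual Fn um u0 up \<ge> 0))
         \<longleftrightarrow> (\<forall>um\<in>Y. \<forall>up\<in>Y. interface_residual F um up \<ge> 0)"
    by (rule exists_flux_iff) simp
  moreover have "(\<exists>Fn. (\<forall>u\<in>Y. Fn u u = F u) \<and>
            (\<forall>um\<in>Y. \<forall>u0\<in>Y. \<forall>up\<in>Y. cell_residual Fn um u0 up = 0))
         \<longleftrightarrow> (\<forall>um\<in>Y. \<forall>up\<in>Y. interface_residual F um up = 0)"
    by (rule exists_flux_iff) simp
  moreover have "\<forall>Fn. (\<forall>u\<in>Y. Fn u u = F u) \<and>
            (\<forall>um\<in>Y. \<forall>u0\<in>Y. \<forall>up\<in>Y. cell_residual Fn um u0 up = 0)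
         \<longrightarrow> (\<forall>um\<in>Y. \<forall>up\<in>Y. Fn um up = (F um + F up + left_share um up - right_share um up
                                            - left_share um um + right_share up up) / 2)"
    using flux_unique by simp
  ultimately show ?thesis
    using consistent
    by (simp only: cell_update_ge_iff cell_update_eq_iff interface_jump_le_iff
        interface_jump_eq_iff unique_flux_eq cong: ball_cong)
qed

end
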